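(* Let $N,L\ge1$. Then for any $k\in\mathbb{R}^2$ and any $A\ge|k|$, the set \[ \{k'\in\mathbb{R}^2:\ |k'|\le N,\ |k-k'|\le N,\ |k'|+|k-k'|\in[A,A+L]\} \] can be covered by at most $O(N^{\frac32}L^{\frac12})$ squares of unit side length, with the implied constant independent of $N,L,k,A$. *)

theory Defs
  imports "HOL-Analysis.Analysis"
begin

definition unit_square :: "real^2 \<Rightarrow> (real^2) set" where
  "unit_square c = {x. \<forall>i. c$i \<le> x$i \<and> x$i \<le> c$i + 1}"

definition shell_set :: "real \<Rightarrow> real \<Rightarrow> real^2 \<Rightarrow> real \<Rightarrow> (real^2) set" where
  "shell_set N L k A = {k'. norm k' \<le> N \<and> norm (k - k') \<le> N \<and>
       A \<le> norm k' + norm (k - k') \<and> norm k' + norm (k - k') \<le> A + L}"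

end

theory Submission
  imports Defs
begin

(* The squares at
   the lattice corners of the points of a set S cover S; their open interiors are pairwise
   disjoint and lie within distance 2 of S, so there are at most as many of them as the area of
   the 2-neighbourhood of S.
   Since |k'| + |k - k'| is 2-Lipschitz in k', the 2-neighbourhood of the shell lies between the
   confocal ellipses with foci 0, k and focal sums A - 5 and A + L + 4. An ellipse with focal sum
   2a and focal distance 2c has area pi a sqrt(a^2 - c^2), and the difference of the two areas is
   O(a (a1 - a0) + a sqrt(a (a1 - a0))) = O(N^(3/2) L^(1/2)) when A, L <= 2N. Widths L > 2N do
   not change the shell, and for A > 2N it is empty. *)

definition lattice_corner :: "real^2 \<Rightarrow> real^2" where
  "lattice_corner x = (\<chi> i. of_int \<lfloor>x$i\<rfloor>)"

lemma mem_unit_square_lattice_corner: "x \<in> unit_square (lattice_corner x)"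
  by (simp add: unit_square_def lattice_corner_def)

lemma lattice_corner_eq_of_mem_box:
  assumes "y \<in> box (lattice_corner x) (lattice_corner x + 1)"
  shows "lattice_corner y = lattice_corner x"
proof -
  have "of_int \<lfloor>x$i\<rfloor> < y$i \<and> y$i < of_int \<lfloor>x$i\<rfloor> + 1" for i
    using assms by (simp add: mem_box_cart lattice_corner_def)
  then have "\<lfloor>y$i\<rfloor> = \<lfloor>x$i\<rfloor>" for i
    by (meson floor_unique less_imp_le)
  then show ?thesis by (simp add: lattice_corner_def)
qed

lemma dist_lt_2_of_mem_box_lattice_corner:
  assumes "y \<in> box (lattice_corner x) (lattice_corner x + 1)"
  shows "dist x y < 2"
proof -
  have "of_int \<lfloor>x$i\<rfloor> < y$i \<and> y$i < of_int \<lfloor>x$i\<rfloor> + 1" for i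
    using assms by (simp add: mem_box_cart lattice_corner_def)
  then have coord: "\<bar>(x - y)$i\<bar> < 1" for i
    using of_int_floor_le[of "x$i"] real_of_int_floor_add_one_gt[of "x$i"]
    by (smt (verit) vector_minus_component)
  have "(\<Sum>i\<in>UNIV. \<bar>(x - y)$i\<bar>) < 2"
    using coord[of 1] coord[of 2] by (simp add: sum_2)
  then show ?thesis
    using norm_le_l1_cart[of "x - y"] by (simp add: dist_norm)
qed

lemma finite_lattice_corner_image:
  assumes "bounded S"
  shows "finite (lattice_corner ` S)"
proof -
  obtain R where R: "\<And>x. x \<in> S \<Longrightarrow> norm x \<le> R"
    using assms bounded_iff by blast
  define M where "M = \<lceil>R\<rceil>"
  have "lattice_corner ` S \<subseteq> (\<lambda>f. \<chi> i. of_int (f i)) ` (\<Pi>\<^sub>E i\<in>UNIV. {-M..M})"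
  proof
    fix c assume "c \<in> lattice_corner ` S"
    then obtain x where "x \<in> S" and c: "c = lattice_corner x" by blast
    have coord: "\<bar>x$i\<bar> \<le> R" for i
      using component_le_norm_cart[of x i] R[OF \<open>x \<in> S\<close>] by linarith
    have "\<lfloor>x$i\<rfloor> \<in> {-M..M}" for i
    proof -
      have "x$i \<le> R" "-R \<le> x$i" using coord[of i] by linarith+
      then have "\<lfloor>x$i\<rfloor> \<le> \<lfloor>R\<rfloor>" "\<lfloor>-R\<rfloor> \<le> \<lfloor>x$i\<rfloor>" by (simp_all add: floor_mono)
      then show ?thesis
        unfolding M_def floor_minus atLeastAtMost_iff using floor_le_ceiling[of R] by linarith
    qed
    then show "c \<in> (\<lambda>f. \<chi> i. of_int (f i)) ` (\<Pi>\<^sub>E i\<in>UNIV. {-M..M})"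
      unfolding c lattice_corner_def
      by (intro image_eqI[of _ _ "\<lambda>i. \<lfloor>x$i\<rfloor>"]) (auto simp: PiE_UNIV_domain)
  qed
  then show ?thesis
    by (rule finite_subset) (intro finite_imageI finite_PiE; simp)
qed

lemma measure_unit_box: "measure lebesgue (box c (c + 1 :: real^'n)) = 1"
proof -
  have "box c (c + 1) \<in> sets lborel" by simp
  then have "measure lebesgue (box c (c + 1)) = measure lborel (box c (c + 1))"
    by (simp add: measure_completion)
  also have "\<dots> = (\<Prod>b\<in>Basis. ((c + 1) - c) \<bullet> b)"
    by (rule measure_lborel_box) (auto simp: Basis_vec_def inner_axis)
  also have "\<dots> = 1"
    by (rule prod.neutral) (auto simp: Basis_vec_def inner_axis)
  finally show ?thesis .
qed

lemma unit_square_cover_card_le_measure: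
  fixes S T :: "(real^2) set"
  assumes "bounded S" and "T \<in> lmeasurable"
    and nbhd: "\<And>x y. x \<in> S \<Longrightarrow> dist x y < 2 \<Longrightarrow> y \<in> T"
  shows "\<exists>F. finite F \<and> real (card F) \<le> measure lebesgue T \<and> S \<subseteq> (\<Union>c\<in>F. unit_square c)"
proof (intro exI conjI)
  define F where "F = lattice_corner ` S"
  define P where "P c = box c (c + 1)" for c :: "real^2"
  show "finite F"
    unfolding F_def using \<open>bounded S\<close> by (rule finite_lattice_corner_image)
  show "S \<subseteq> (\<Union>c\<in>F. unit_square c)"
    unfolding F_def using mem_unit_square_lattice_corner by blast
  have disj: "disjoint_family_on P F"
    unfolding disjoint_family_on_def F_def P_def
    by (metis (no_types, lifting) disjoint_iff imageE lattice_corner_eq_of_mem_box)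
  have P: "P c \<in> lmeasurable" "measure lebesgue (P c) = 1" for c
    unfolding P_def by (simp_all add: lmeasurable_open measure_unit_box)
  have "real (card F) = (\<Sum>c\<in>F. measure lebesgue (P c))"
    by (simp add: P)
  also have "\<dots> = measure lebesgue (\<Union>c\<in>F. P c)"
    by (rule measure_finite_Union[symmetric, OF \<open>finite F\<close> _ disj])
      (use P(1) fmeasurableD in blast, metis P(1) fmeasurableD2 infinity_ennreal_def)
  also have "\<dots> \<le> measure lebesgue T"
  proof (rule measure_mono_fmeasurable)
    show "(\<Union>c\<in>F. P c) \<subseteq> T"
      unfolding F_def P_def using nbhd dist_lt_2_of_mem_box_lattice_corner by blast
  qed (use \<open>finite F\<close> P \<open>T \<in> lmeasurable\<close> in auto)
  finally show "real (card F) \<le> measure lebesgue T" .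
qed

definition focal_ellipse :: "real^2 \<Rightarrow> real \<Rightarrow> (real^2) set" where
  "focal_ellipse k s = {x. norm x + norm (k - x) \<le> s}"

lemma compact_focal_ellipse: "compact (focal_ellipse k s)"
proof -
  have "focal_ellipse k s \<subseteq> cball 0 s"
    by (auto simp: focal_ellipse_def) (smt (verit) norm_ge_zero)
  moreover have "closed (focal_ellipse k s)"
    unfolding focal_ellipse_def by (intro closed_Collect_le continuous_intros)
  ultimately show ?thesis
    by (meson bounded_cball bounded_subset compact_eq_bounded_closed)
qed

lemma lmeasurable_focal_ellipse: "focal_ellipse k s \<in> lmeasurable"
  by (simp add: compact_focal_ellipse lmeasurable_compact)

lemma focal_ellipse_mono: "s \<le> t \<Longrightarrow> focal_ellipse k s \<subseteq> focal_ellipse k t"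
  by (auto simp: focal_ellipse_def)

lemma focal_sum_dist_le:
  fixes x y k :: "'a::real_normed_vector"
  shows "\<bar>(norm y + norm (k - y)) - (norm x + norm (k - x))\<bar> \<le> 2 * dist x y"
  using norm_triangle_ineq3[of y x] norm_triangle_ineq3[of "k - y" "k - x"]
  by (simp add: dist_norm norm_minus_commute)

definition rotate90 :: "real^2 \<Rightarrow> real^2" where
  "rotate90 u = (\<chi> i. if i = 1 then - u$2 else u$1)"

lemma inner_real2: "(x::real^2) \<bullet> y = x$1 * y$1 + x$2 * y$2"
  by (simp add: inner_vec_def sum_2)

lemma rotate90_components [simp]: "rotate90 u $ 1 = - u$2" "rotate90 u $ 2 = u$1"
  by (simp_all add: rotate90_def)

lemma
  assumes "norm u = 1"
  shows norm_power2_rotate90_frame: "norm y ^ 2 = (u \<bullet> y)^2 + (rotate90 u \<bullet> y)^2"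
    and rotate90_frame_decomposition: "y = (u \<bullet> y) *\<^sub>R u + (rotate90 u \<bullet> y) *\<^sub>R rotate90 u"
proof -
  have u: "u$1^2 + u$2^2 = 1"
    using assms by (simp add: norm_eq_sqrt_inner inner_real2 power2_eq_square)
  show "norm y ^ 2 = (u \<bullet> y)^2 + (rotate90 u \<bullet> y)^2"
    unfolding power2_norm_eq_inner inner_real2 rotate90_components using u by algebra
  have "y$1 = (u \<bullet> y) * u$1 + (rotate90 u \<bullet> y) * (- u$2)"
       "y$2 = (u \<bullet> y) * u$2 + (rotate90 u \<bullet> y) * u$1"
    unfolding inner_real2 rotate90_components using u by algebra+
  then show "y = (u \<bullet> y) *\<^sub>R u + (rotate90 u \<bullet> y) *\<^sub>R rotate90 u"
    by (simp add: vec_eq_iff forall_2)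
qed

lemma inner_rotate90_self [simp]: "u \<bullet> rotate90 u = 0" "rotate90 u \<bullet> u = 0"
  by (simp_all add: inner_real2)

lemma inner_rotate90_rotate90 [simp]: "rotate90 u \<bullet> rotate90 u = u \<bullet> u"
  by (simp add: inner_real2)

text \<open>\<open>r1, r2\<close> are the distances of \<open>(X, Y)\<close> from the foci \<open>(\<plusminus>c, 0)\<close>. In the identity
  \<open>factor\<close> below the second factor on the left is positive, since \<open>\<bar>r1 - r2\<bar> \<le> 2c < 2a\<close>.\<close>

lemma focal_sum_le_iff_ellipse_equation:
  fixes a c X Y r1 r2 :: real
  assumes "0 \<le> c" "c < a" "0 \<le> r1" "0 \<le> r2"
    and r1: "r1^2 = (X + c)^2 + Y^2" and r2: "r2^2 = (X - c)^2 + Y^2"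
    and "\<bar>r1 - r2\<bar> \<le> 2*c"
  shows "r1 + r2 \<le> 2*a \<longleftrightarrow> X^2/a^2 + Y^2/(a^2 - c^2) \<le> 1"
proof -
  have factor: "(4*a^2 - (r1 + r2)^2) * (4*a^2 - (r1 - r2)^2) =
      16 * (a^2*(a^2 - c^2) - (a^2 - c^2)*X^2 - a^2*Y^2)"
    using r1 r2 by algebra
  have ca: "c^2 < a^2" using assms by (simp add: power_strict_mono)
  have "(r1 - r2)^2 \<le> (2*c)^2"
    using assms by (metis abs_le_square_iff abs_of_nonneg mult_nonneg_nonneg zero_le_numeral)
  then have pos: "4*a^2 - (r1 - r2)^2 > 0" using ca by simp
  have pa: "a^2*(a^2 - c^2) > 0" using ca assms by (simp add: zero_less_mult_iff)
  have "X^2/a^2 + Y^2/(a^2 - c^2) = ((a^2 - c^2)*X^2 + a^2*Y^2) / (a^2*(a^2 - c^2))"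
  proof -
    have "a \<noteq> 0" "a^2 - c^2 \<noteq> 0" using ca assms by auto
    then show ?thesis by (simp add: field_simps)
  qed
  then have "X^2/a^2 + Y^2/(a^2 - c^2) \<le> 1 \<longleftrightarrow> (a^2 - c^2)*X^2 + a^2*Y^2 \<le> a^2*(a^2 - c^2)"
    by (simp add: divide_le_eq_1_pos[OF pa])
  also have "\<dots> \<longleftrightarrow> 0 \<le> (4*a^2 - (r1 + r2)^2) * (4*a^2 - (r1 - r2)^2)"
    unfolding factor by auto
  also have "\<dots> \<longleftrightarrow> (r1 + r2)^2 \<le> (2*a)^2"
    using pos by (simp add: zero_le_mult_iff power_mult_distrib)
  also have "\<dots> \<longleftrightarrow> r1 + r2 \<le> 2*a"
    using assms by (intro power_mono_iff) auto
  finally show ?thesis by simp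
qed

lemma mem_focal_ellipse_iff:
  assumes u: "norm u = 1" and "0 \<le> c" "c < a"
  shows "x \<in> focal_ellipse ((2*c) *\<^sub>R u) (2*a) \<longleftrightarrow>
    (u \<bullet> (x - c *\<^sub>R u))^2/a^2 + (rotate90 u \<bullet> (x - c *\<^sub>R u))^2/(a^2 - c^2) \<le> 1"
proof -
  define k where "k = (2*c) *\<^sub>R u"
  define X where "X = u \<bullet> (x - c *\<^sub>R u)"
  define Y where "Y = rotate90 u \<bullet> (x - c *\<^sub>R u)"
  have uu: "u \<bullet> u = 1" using u by (simp add: norm_eq_1)
  have "norm x ^ 2 = (X + c)^2 + Y^2"
    using norm_power2_rotate90_frame[OF u, of x] uu
    by (simp add: X_def Y_def inner_diff_right)
  moreover have "norm (k - x) ^ 2 = (X - c)^2 + Y^2"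
    using norm_power2_rotate90_frame[OF u, of "k - x"] uu
    by (simp add: k_def X_def Y_def inner_diff_right power2_commute)
  moreover have "\<bar>norm x - norm (k - x)\<bar> \<le> 2*c"
    using norm_triangle_ineq3[of x "x - k"] \<open>0 \<le> c\<close>
    by (simp add: norm_minus_commute k_def u)
  ultimately show ?thesis
    using focal_sum_le_iff_ellipse_equation[OF \<open>0 \<le> c\<close> \<open>c < a\<close> norm_ge_zero norm_ge_zero]
    by (simp add: focal_ellipse_def k_def X_def Y_def)
qed

lemma focal_ellipse_eq_affine_image:
  assumes u: "norm u = 1" and "0 \<le> c" "c < a"
  defines "b \<equiv> sqrt (a^2 - c^2)"
  defines "M \<equiv> \<lambda>p. (a * (u \<bullet> p)) *\<^sub>R u + (b * (rotate90 u \<bullet> p)) *\<^sub>R rotate90 u"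
  shows "focal_ellipse ((2*c) *\<^sub>R u) (2*a) = (+) (c *\<^sub>R u) ` M ` cball 0 1"
proof -
  define v where "v = rotate90 u"
  have uu: "u \<bullet> u = 1" and vv: "v \<bullet> v = 1" using u by (simp_all add: v_def norm_eq_1)
  have b: "b > 0" "b^2 = a^2 - c^2"
    using assms by (simp_all add: b_def power_strict_mono)
  have a: "a > 0" using assms by linarith
  have M: "u \<bullet> M p = a * (u \<bullet> p)" "v \<bullet> M p = b * (v \<bullet> p)" for p
    by (simp_all add: M_def v_def[symmetric] inner_add_right uu vv) (simp_all add: v_def)
  have ellipse: "x \<in> focal_ellipse ((2*c) *\<^sub>R u) (2*a) \<longleftrightarrow>
      (u \<bullet> (x - c *\<^sub>R u) / a)^2 + (v \<bullet> (x - c *\<^sub>R u) / b)^2 \<le> 1" for x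
    using mem_focal_ellipse_iff[OF assms(1-3)] by (simp add: v_def b power_divide)
  show ?thesis
  proof (intro set_eqI iffI)
    fix x assume "x \<in> focal_ellipse ((2*c) *\<^sub>R u) (2*a)"
    define y where "y = x - c *\<^sub>R u"
    define p where "p = ((u \<bullet> y)/a) *\<^sub>R u + ((v \<bullet> y)/b) *\<^sub>R v"
    have p: "u \<bullet> p = (u \<bullet> y)/a" "v \<bullet> p = (v \<bullet> y)/b"
      by (simp_all add: p_def inner_add_right uu vv) (simp_all add: v_def)
    have "M p = y"
      using rotate90_frame_decomposition[OF u, of y] a b
      by (simp add: M_def v_def[symmetric] p)
    moreover have "norm p ^ 2 \<le> 1"
      using \<open>x \<in> _\<close> norm_power2_rotate90_frame[OF u, of p]
      by (simp add: ellipse v_def[symmetric] p y_def)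
    then have "norm p \<le> 1" by (simp add: power_le_one_iff)
    ultimately show "x \<in> (+) (c *\<^sub>R u) ` M ` cball 0 1"
      unfolding y_def by (intro image_eqI[of _ _ "M p"] image_eqI[of _ _ p]) auto
  next
    fix x assume "x \<in> (+) (c *\<^sub>R u) ` M ` cball 0 1"
    then obtain p where "norm p \<le> 1" and x: "x - c *\<^sub>R u = M p" by auto
    have "(u \<bullet> (x - c *\<^sub>R u) / a)^2 + (v \<bullet> (x - c *\<^sub>R u) / b)^2 = norm p ^ 2"
      using norm_power2_rotate90_frame[OF u, of p] a b unfolding x M by (simp add: v_def)
    also have "\<dots> \<le> 1" using \<open>norm p \<le> 1\<close> by (simp add: power_le_one)
    finally show "x \<in> focal_ellipse ((2*c) *\<^sub>R u) (2*a)" using ellipse by blast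
  qed
qed

lemma measure_unit_disc: "measure lebesgue (cball (0::real^2) 1) = pi"
proof -
  have "measure lebesgue (cball (0::real^2) 1) = measure lborel (cball (0::real^2) 1)"
    by (simp add: measure_completion)
  also have "\<dots> = unit_ball_vol (real (2 * 1))"
    using content_cball[of 1 "0::real^2"] by simp
  also have "\<dots> = pi"
    by (simp only: unit_ball_vol_even) simp
  finally show ?thesis .
qed

lemma measure_focal_ellipse:
  assumes "norm k < s"
  shows "measure lebesgue (focal_ellipse k s) = pi * (s/2) * sqrt ((s/2)^2 - (norm k/2)^2)"
proof -
  define a where "a = s/2"
  define c where "c = norm k/2"
  define b where "b = sqrt (a^2 - c^2)"
  obtain u :: "real^2" where u: "norm u = 1" and k: "k = (2*c) *\<^sub>R u"
  proof (cases "k = 0")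
    case True
    then show ?thesis using that[of "axis 1 1"] by (simp add: c_def)
  next
    case False
    then show ?thesis using that[of "k /\<^sub>R norm k"] by (simp add: c_def)
  qed
  define M where "M p = (a * (u \<bullet> p)) *\<^sub>R u + (b * (rotate90 u \<bullet> p)) *\<^sub>R rotate90 u" for p
  have "0 \<le> c" "c < a" using assms by (simp_all add: a_def c_def)
  then have ab: "0 \<le> a * b" by (simp add: b_def)
  have "linear M"
    by (rule linearI) (simp_all add: M_def inner_add_right scaleR_add_right algebra_simps)
  have "u$1^2 + u$2^2 = 1"
    using u by (simp add: norm_eq_sqrt_inner inner_real2 power2_eq_square)
  then have det: "det (matrix M) = a * b"
    unfolding det_2 matrix_def by (simp add: M_def inner_real2 axis_def) algebra
  have "measure lebesgue (focal_ellipse k s) = measure lebesgue (M ` cball 0 1)"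
    using focal_ellipse_eq_affine_image[OF u \<open>0 \<le> c\<close> \<open>c < a\<close>]
    by (simp add: k a_def M_def b_def measure_translation)
  also have "\<dots> = a * b * pi"
    using measure_linear_image[OF \<open>linear M\<close>] det ab
    by (simp add: lmeasurable_cball measure_unit_disc)
  finally show ?thesis by (simp add: a_def b_def c_def)
qed

lemma ellipse_area_increment_le:
  fixes a0 a1 c :: real
  assumes "0 \<le> c" "c \<le> a0" "a0 \<le> a1"
  shows "a1 * sqrt (a1^2 - c^2) - a0 * sqrt (a0^2 - c^2)
    \<le> a1 * ((a1 - a0) + sqrt (2 * a1 * (a1 - a0)))"
proof -
  define b1 where "b1 = sqrt (a1^2 - c^2)"
  define b0 where "b0 = sqrt (a0^2 - c^2)"
  have sq: "c^2 \<le> a0^2" "a0^2 \<le> a1^2" using assms by (simp_all add: power_mono)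
  have "b1 \<le> a1" using assms sq by (simp add: b1_def real_sqrt_le_iff')
  have "b0 \<le> b1" using sq by (simp add: b0_def b1_def)
  have "b1 \<le> sqrt (a1^2 - a0^2) + b0"
    using sqrt_add_le_add_sqrt[of "a1^2 - a0^2" "a0^2 - c^2"] sq by (simp add: b1_def b0_def)
  moreover have "sqrt (a1^2 - a0^2) \<le> sqrt (2 * a1 * (a1 - a0))"
  proof (rule real_sqrt_le_mono)
    have "2 * a1 * (a1 - a0) - (a1^2 - a0^2) = (a1 - a0)^2"
      by (simp add: power2_eq_square algebra_simps)
    then show "a1^2 - a0^2 \<le> 2 * a1 * (a1 - a0)" using zero_le_power2[of "a1 - a0"] by linarith
  qed
  ultimately have b: "b1 - b0 \<le> sqrt (2 * a1 * (a1 - a0))" by linarith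
  have "a1 * b1 - a0 * b0 = (a1 - a0) * b1 + a0 * (b1 - b0)" by (simp add: algebra_simps)
  also have "\<dots> \<le> (a1 - a0) * a1 + a1 * sqrt (2 * a1 * (a1 - a0))"
    using assms \<open>b1 \<le> a1\<close> \<open>b0 \<le> b1\<close> b
    by (intro add_mono mult_mono) (auto simp: b1_def)
  finally show ?thesis by (simp add: b1_def b0_def algebra_simps)
qed

lemma ellipse_area_le:
  fixes a0 a1 c :: real
  assumes "0 \<le> c" "a0 \<le> c" "c \<le> a1"
  shows "a1 * sqrt (a1^2 - c^2) \<le> a1 * sqrt (2 * a1 * (a1 - a0))"
proof -
  have "a1^2 - c^2 = (a1 - c) * (a1 + c)" by (simp add: power2_eq_square algebra_simps)
  also have "\<dots> \<le> (a1 - a0) * (2 * a1)" using assms by (intro mult_mono) auto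
  finally show ?thesis using assms by (intro mult_left_mono) (auto simp: mult_ac)
qed

lemma measure_focal_ellipse_shell_le:
  assumes "norm k < s1" "s0 \<le> s1"
  shows "measure lebesgue (focal_ellipse k s1 - focal_ellipse k s0)
    \<le> pi * (s1/2) * ((s1 - s0)/2 + sqrt (s1 * (s1 - s0)/2))"
proof -
  define a1 a0 c where "a1 = s1/2" and "a0 = s0/2" and "c = norm k/2"
  have "0 \<le> c" "c < a1" "a0 \<le> a1" using assms by (simp_all add: a1_def a0_def c_def)
  have diff: "a1 - a0 = (s1 - s0)/2" and prod: "2 * a1 * (a1 - a0) = s1 * (s1 - s0)/2"
    by (simp_all add: a1_def a0_def field_simps)
  have "measure lebesgue (focal_ellipse k s1 - focal_ellipse k s0)
      = measure lebesgue (focal_ellipse k s1) - measure lebesgue (focal_ellipse k s0)"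
    using assms(2) by (intro measurable_measure_Diff lmeasurable_focal_ellipse
        fmeasurableD focal_ellipse_mono)
  also have "\<dots> \<le> pi * (a1 * ((a1 - a0) + sqrt (2 * a1 * (a1 - a0))))"
  proof (cases "norm k < s0")
    case True
    then have "c \<le> a0" by (simp add: a0_def c_def)
    have "measure lebesgue (focal_ellipse k s1) - measure lebesgue (focal_ellipse k s0)
        = pi * (a1 * sqrt (a1^2 - c^2) - a0 * sqrt (a0^2 - c^2))"
      using assms True by (simp add: measure_focal_ellipse a1_def a0_def c_def algebra_simps)
    then show ?thesis
      using mult_left_mono[OF ellipse_area_increment_le[OF \<open>0 \<le> c\<close> \<open>c \<le> a0\<close> \<open>a0 \<le> a1\<close>]]
      by simp
  next
    case False
    then have "a0 \<le> c" by (simp add: a0_def c_def)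
    have "measure lebesgue (focal_ellipse k s1) = pi * (a1 * sqrt (a1^2 - c^2))"
      using assms by (simp add: measure_focal_ellipse a1_def c_def)
    also have "\<dots> \<le> pi * (a1 * sqrt (2 * a1 * (a1 - a0)))"
      using ellipse_area_le[OF \<open>0 \<le> c\<close> \<open>a0 \<le> c\<close>] \<open>c < a1\<close> by simp
    also have "\<dots> \<le> pi * (a1 * ((a1 - a0) + sqrt (2 * a1 * (a1 - a0))))"
      using \<open>0 \<le> c\<close> \<open>c < a1\<close> \<open>a0 \<le> a1\<close> by (simp add: algebra_simps)
    finally show ?thesis
      using measure_nonneg[of lebesgue "focal_ellipse k s0"] by linarith
  qed
  also have "\<dots> = pi * (s1/2) * ((s1 - s0)/2 + sqrt (s1 * (s1 - s0)/2))"
    by (simp only: prod diff) (simp add: a1_def)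
  finally show ?thesis .
qed

lemma powr_three_halves_mult_powr_half:
  fixes N L :: real
  assumes "0 \<le> N" "0 \<le> L"
  shows "N powr (3/2) * L powr (1/2) = N * sqrt (N * L)"
proof -
  have "N powr (3/2) = N powr 1 * N powr (1/2)" using powr_add[of N 1 "1/2"] by simp
  also have "\<dots> = N * sqrt N"
    using assms by (cases "N = 0") (simp_all add: powr_half_sqrt)
  finally show ?thesis using assms by (simp add: powr_half_sqrt real_sqrt_mult)
qed

lemma shell_set_subset_cball: "shell_set N L k A \<subseteq> cball 0 N"
  by (auto simp: shell_set_def)

lemma shell_set_empty: "2*N < A \<Longrightarrow> shell_set N L k A = {}"
  by (auto simp: shell_set_def)

lemma shell_set_min_width:
  assumes "0 \<le> A"
  shows "shell_set N (min L (2*N)) k A = shell_set N L k A"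
  using assms by (auto simp: shell_set_def min_def)

lemma shell_area_bound:
  fixes N L A :: real
  assumes "1 \<le> N" "1 \<le> L" "L \<le> 2*N" "0 \<le> A" "A \<le> 2*N"
  shows "pi * ((A + L + 4)/2) * ((L + 9)/2 + sqrt ((A + L + 4) * (L + 9)/2))
    \<le> 64 * pi * (N * sqrt (N * L))"
proof -
  have "(L + 9)/2 \<le> sqrt (64 * (N * L))"
  proof (rule real_le_rsqrt)
    have "((L + 9)/2)^2 \<le> (5 * L)^2" using assms by (intro power_mono) auto
    also have "\<dots> \<le> 64 * (N * L)" using assms by (simp add: power2_eq_square)
    finally show "((L + 9)/2)^2 \<le> 64 * (N * L)" .
  qed
  moreover have "sqrt ((A + L + 4) * (L + 9)/2) \<le> sqrt (64 * (N * L))"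
  proof (rule real_sqrt_le_mono)
    have "(A + L + 4) * (L + 9) \<le> (8 * N) * (10 * L)" using assms by (intro mult_mono) auto
    moreover have "0 \<le> N * L" using assms by simp
    ultimately show "(A + L + 4) * (L + 9)/2 \<le> 64 * (N * L)" by simp
  qed
  moreover have "sqrt (64 * (N * L)) = 8 * sqrt (N * L)"
    by (simp add: real_sqrt_mult)
  ultimately have "(L + 9)/2 + sqrt ((A + L + 4) * (L + 9)/2) \<le> 16 * sqrt (N * L)"
    by linarith
  moreover have "(A + L + 4)/2 \<le> 4 * N" using assms by simp
  ultimately have "((A + L + 4)/2) * ((L + 9)/2 + sqrt ((A + L + 4) * (L + 9)/2))
      \<le> (4 * N) * (16 * sqrt (N * L))"
    using assms by (intro mult_mono) auto
  then show ?thesis by (simp add: mult_left_mono)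
qed

lemma shell_set_unit_square_cover:
  assumes "1 \<le> N" "1 \<le> L" "L \<le> 2*N" "norm k \<le> A" "A \<le> 2*N"
  shows "\<exists>F. finite F \<and> real (card F) \<le> 64 * pi * (N * sqrt (N * L)) \<and>
    shell_set N L k A \<subseteq> (\<Union>c\<in>F. unit_square c)"
proof -
  define T where "T = focal_ellipse k (A + L + 4) - focal_ellipse k (A - 5)"
  have T: "T \<in> lmeasurable"
    unfolding T_def by (intro fmeasurable_Diff lmeasurable_focal_ellipse fmeasurableD)
  have nbhd: "y \<in> T" if "x \<in> shell_set N L k A" "dist x y < 2" for x y
  proof -
    have "A \<le> norm x + norm (k - x)" "norm x + norm (k - x) \<le> A + L"
      using that(1) by (simp_all add: shell_set_def)
    moreover have "\<bar>(norm y + norm (k - y)) - (norm x + norm (k - x))\<bar> < 4"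
      using focal_sum_dist_le[of y k x] that(2) by linarith
    ultimately have "norm y + norm (k - y) \<le> A + L + 4" "\<not> norm y + norm (k - y) \<le> A - 5"
      unfolding abs_less_iff by linarith+
    then show ?thesis by (simp add: T_def focal_ellipse_def)
  qed
  have "bounded (shell_set N L k A)"
    using bounded_subset[OF bounded_cball shell_set_subset_cball] .
  then have "\<exists>F. finite F \<and> real (card F) \<le> measure lebesgue T \<and>
      shell_set N L k A \<subseteq> (\<Union>c\<in>F. unit_square c)"
    using T nbhd by (rule unit_square_cover_card_le_measure)
  then obtain F where "finite F" and card: "real (card F) \<le> measure lebesgue T"
    and cover: "shell_set N L k A \<subseteq> (\<Union>c\<in>F. unit_square c)"
    by blast
  have measure_T: "measure lebesgue T \<le> 64 * pi * (N * sqrt (N * L))"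
  proof -
    have width: "(A + L + 4) - (A - 5) = L + 9" by simp
    have "measure lebesgue T
        \<le> pi * ((A + L + 4)/2) * ((L + 9)/2 + sqrt ((A + L + 4) * (L + 9)/2))"
      using measure_focal_ellipse_shell_le[of k "A + L + 4" "A - 5"] assms
      unfolding T_def width by linarith
    also have "\<dots> \<le> 64 * pi * (N * sqrt (N * L))"
      using assms norm_ge_zero[of k] by (intro shell_area_bound) linarith+
    finally show ?thesis .
  qed
  show ?thesis
    using \<open>finite F\<close> order.trans[OF card measure_T] cover by blast
qed

theorem propositionA2:
  shows "\<exists>C>0. \<forall>N L :: real. \<forall>k :: real^2. \<forall>A :: real.
           N \<ge> 1 \<longrightarrow> L \<ge> 1 \<longrightarrow> A \<ge> norm k \<longrightarrow>
           (\<exists>F. finite F \<and> real (card F) \<le> C * N powr (3/2) * L powr (1/2) \<and>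
                shell_set N L k A \<subseteq> (\<Union>c\<in>F. unit_square c))"
proof (intro exI[of _ "64 * pi"] conjI allI impI)
  fix N L :: real and k :: "real^2" and A :: real
  assume "N \<ge> 1" "L \<ge> 1" "A \<ge> norm k"
  define L' where "L' = min L (2*N)"
  have bound: "64 * pi * (N * sqrt (N * L')) \<le> 64 * pi * N powr (3/2) * L powr (1/2)"
    using \<open>N \<ge> 1\<close> \<open>L \<ge> 1\<close>
    by (simp add: powr_three_halves_mult_powr_half L'_def mult.assoc mult_left_mono)
  show "\<exists>F. finite F \<and> real (card F) \<le> 64 * pi * N powr (3/2) * L powr (1/2) \<and>
      shell_set N L k A \<subseteq> (\<Union>c\<in>F. unit_square c)"
  proof (cases "A \<le> 2*N")
    case True
    then obtain F where "finite F" and card: "real (card F) \<le> 64 * pi * (N * sqrt (N * L'))"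
      and cover: "shell_set N L' k A \<subseteq> (\<Union>c\<in>F. unit_square c)"
      using shell_set_unit_square_cover[of N L' k A] \<open>N \<ge> 1\<close> \<open>L \<ge> 1\<close> \<open>A \<ge> norm k\<close>
      by (auto simp: L'_def)
    have "shell_set N L' k A = shell_set N L k A"
      unfolding L'_def using \<open>A \<ge> norm k\<close> norm_ge_zero[of k]
      by (intro shell_set_min_width) linarith
    with \<open>finite F\<close> order_trans[OF card bound] cover show ?thesis by blast
  next
    case False
    have "0 \<le> 64 * pi * N powr (3/2) * L powr (1/2)" by simp
    then show ?thesis using False shell_set_empty[of N A L k] by (intro exI[of _ "{}"]) simp
  qed
qed simp

end
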